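(* Let $\{x_n\}\subset X$, $\{y_n\}\subset X^{\ast}$ form a cross-frame in the Banach space $X$, with synthesis operator $S:X_d\to X$, analysis operator $\widetilde R:X\to X_d$, and $N=\operatorname{Ker}(S)$. Let $B:X\to X$ be an operator. Then there exists an operator $A:X_d\to X_d$ with $SA=BS$, and the operators $A:X_d\to X_d$ satisfying $SA=BS$ are exactly those of the form $$A=\widetilde R B S+A_0,$$ where $A_0:X_d\to X_d$ is an arbitrary operator with $A_0(X_d)\subset N$.
   Context: $X$ is a Banach space, $X^{\ast}$ its dual, and $(x,y)$ denotes the value of $y\in X^{\ast}$ at $x\in X$. $X_d$ is a Banach space of scalar sequences $a=\{a_n\}$ in which the unit vectors $\varepsilon_n=\{\delta_{nj}\}_j$ form a basis; its dual $X_d^{\ast}$ is identified with a space of sequences via $b\mapsto\{b(\varepsilon_n)\}$, and it is assumed that the coordinate functionals $\{\varepsilon_n^{\ast}\}$ form a basis of $X_d^{\ast}$. A sequence $\{y_n\}\subset X^{\ast}$ is a frame if there are $A,B>0$ such that $\{(x,y_n)\}\in X_d$ and $A\|x\|_X\le \|\{(x,y_n)\}\|_{X_d}\le B\|x\|_X$ for all $x\in X$. A sequence $\{x_n\}\subset X$ is a co-frame if $\{(x_n,y)\}\in X_d^{\ast}$ for all $y\in X^{\ast}$ and there are $\tilde A,\tilde B>0$ with $\tilde A\|y\|_{X^{\ast}}\le \|\{(x_n,y)\}\|_{X_d^{\ast}}\le \tilde B\|y\|_{X^{\ast}}$ for all $y\in X^{\ast}$. A co-frame $\{x_n\}$ and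 a frame $\{y_n\}$ form a cross-frame if $x=\sum_n (x,y_n)x_n$ for all $x\in X$ and $y=\sum_n (x_n,y)y_n$ for all $y\in X^{\ast}$. The synthesis operator is the bounded linear operator $S:X_d\to X$, $Sa=\sum_n a_nx_n$; the analysis operator is $\widetilde R:X\to X_d$, $\widetilde Rx=\{(x,y_n)\}_n$. $N=\operatorname{Ker}S$ is the space of coefficient sequences of null series $\sum a_nx_n=0$. Operators are linear maps. *)

theory Defs
  imports "HOL-Analysis.Analysis"
begin

definition unitv :: "nat \<Rightarrow> nat \<Rightarrow> real" where
  "unitv n = (\<lambda>j. if j = n then 1 else 0)"

definition seq_banach :: "(nat \<Rightarrow> real) set \<Rightarrow> ((nat \<Rightarrow> real) \<Rightarrow> real) \<Rightarrow> bool" where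
  "seq_banach D nd \<longleftrightarrow>
     (\<lambda>n. 0) \<in> D \<and>
     (\<forall>a\<in>D. \<forall>b\<in>D. (\<lambda>n. a n + b n) \<in> D) \<and>
     (\<forall>a\<in>D. \<forall>c. (\<lambda>n. c * a n) \<in> D) \<and>
     (\<forall>a\<in>D. 0 \<le> nd a) \<and>
     (\<forall>a\<in>D. nd a = 0 \<longleftrightarrow> a = (\<lambda>n. 0)) \<and>
     (\<forall>a\<in>D. \<forall>c. nd (\<lambda>n. c * a n) = \<bar>c\<bar> * nd a) \<and>
     (\<forall>a\<in>D. \<forall>b\<in>D. nd (\<lambda>n. a n + b n) \<le> nd a + nd b) \<and>
     (\<forall>f. (\<forall>k. f k \<in> D) \<and>
          (\<forall>e>0. \<exists>M. \<forall>m\<ge>M. \<forall>k\<ge>M. nd (\<lambda>n. f m n - f k n) < e)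
          \<longrightarrow> (\<exists>a\<in>D. (\<lambda>k. nd (\<lambda>n. f k n - a n)) \<longlonglongrightarrow> 0))"

definition unit_basis :: "(nat \<Rightarrow> real) set \<Rightarrow> ((nat \<Rightarrow> real) \<Rightarrow> real) \<Rightarrow> bool" where
  "unit_basis D nd \<longleftrightarrow> (\<forall>n. unitv n \<in> D) \<and>
     (\<forall>a\<in>D. (\<lambda>N. nd (\<lambda>n. a n - (\<Sum>k<N. a k * unitv k n))) \<longlonglongrightarrow> 0)"

definition dual_fun :: "(nat \<Rightarrow> real) set \<Rightarrow> ((nat \<Rightarrow> real) \<Rightarrow> real) \<Rightarrow> ((nat \<Rightarrow> real) \<Rightarrow> real) \<Rightarrow> bool" where
  "dual_fun D nd b \<longleftrightarrow>
     (\<forall>a\<in>D. \<forall>a'\<in>D. b (\<lambda>n. a n + a' n) = b a + b a') \<and>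
     (\<forall>a\<in>D. \<forall>c. b (\<lambda>n. c * a n) = c * b a) \<and>
     (\<exists>K. \<forall>a\<in>D. \<bar>b a\<bar> \<le> K * nd a)"

definition dual_norm :: "(nat \<Rightarrow> real) set \<Rightarrow> ((nat \<Rightarrow> real) \<Rightarrow> real) \<Rightarrow> ((nat \<Rightarrow> real) \<Rightarrow> real) \<Rightarrow> real" where
  "dual_norm D nd b = Sup {\<bar>b a\<bar> | a. a \<in> D \<and> nd a \<le> 1}"

text \<open>X_d^* identified with the sequences {b(epsilon_n)}.\<close>
definition dual_seqs :: "(nat \<Rightarrow> real) set \<Rightarrow> ((nat \<Rightarrow> real) \<Rightarrow> real) \<Rightarrow> (nat \<Rightarrow> real) set" where
  "dual_seqs D nd = {\<beta>. \<exists>b. dual_fun D nd b \<and> (\<forall>n. \<beta> n = b (unitv n))}"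

definition dual_seq_norm :: "(nat \<Rightarrow> real) set \<Rightarrow> ((nat \<Rightarrow> real) \<Rightarrow> real) \<Rightarrow> (nat \<Rightarrow> real) \<Rightarrow> real" where
  "dual_seq_norm D nd \<beta> =
     dual_norm D nd (SOME b. dual_fun D nd b \<and> (\<forall>n. \<beta> n = b (unitv n)))"

definition coord_dual_basis :: "(nat \<Rightarrow> real) set \<Rightarrow> ((nat \<Rightarrow> real) \<Rightarrow> real) \<Rightarrow> bool" where
  "coord_dual_basis D nd \<longleftrightarrow>
     (\<forall>b. dual_fun D nd b \<longrightarrow>
        (\<lambda>N. dual_norm D nd (\<lambda>a. b a - (\<Sum>k<N. b (unitv k) * a k))) \<longlonglongrightarrow> 0)"

definition is_frame :: "(nat \<Rightarrow> real) set \<Rightarrow> ((nat \<Rightarrow> real) \<Rightarrow> real) \<Rightarrow> (nat \<Rightarrow> ('a::real_normed_vector \<Rightarrow>\<^sub>L real)) \<Rightarrow> bool" where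
  "is_frame D nd ys \<longleftrightarrow> (\<forall>x. (\<lambda>n. blinfun_apply (ys n) x) \<in> D) \<and>
     (\<exists>A B. A > 0 \<and> B > 0 \<and> (\<forall>x. A * norm x \<le> nd (\<lambda>n. blinfun_apply (ys n) x)
                                  \<and> nd (\<lambda>n. blinfun_apply (ys n) x) \<le> B * norm x))"

definition is_coframe :: "(nat \<Rightarrow> real) set \<Rightarrow> ((nat \<Rightarrow> real) \<Rightarrow> real) \<Rightarrow> (nat \<Rightarrow> 'a::real_normed_vector) \<Rightarrow> bool" where
  "is_coframe D nd xs \<longleftrightarrow>
     (\<forall>y::'a \<Rightarrow>\<^sub>L real. (\<lambda>n. blinfun_apply y (xs n)) \<in> dual_seqs D nd) \<and>
     (\<exists>A B. A > 0 \<and> B > 0 \<and> (\<forall>y::'a \<Rightarrow>\<^sub>L real.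
         A * norm y \<le> dual_seq_norm D nd (\<lambda>n. blinfun_apply y (xs n)) \<and>
         dual_seq_norm D nd (\<lambda>n. blinfun_apply y (xs n)) \<le> B * norm y))"

definition is_cross_frame :: "(nat \<Rightarrow> real) set \<Rightarrow> ((nat \<Rightarrow> real) \<Rightarrow> real) \<Rightarrow> (nat \<Rightarrow> 'a::real_normed_vector) \<Rightarrow> (nat \<Rightarrow> ('a \<Rightarrow>\<^sub>L real)) \<Rightarrow> bool" where
  "is_cross_frame D nd xs ys \<longleftrightarrow> is_coframe D nd xs \<and> is_frame D nd ys \<and>
     (\<forall>x. (\<lambda>n. blinfun_apply (ys n) x *\<^sub>R xs n) sums x) \<and>
     (\<forall>y::'a \<Rightarrow>\<^sub>L real. (\<lambda>n. blinfun_apply y (xs n) *\<^sub>R ys n) sums y)"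

definition synth :: "(nat \<Rightarrow> 'a::real_normed_vector) \<Rightarrow> (nat \<Rightarrow> real) \<Rightarrow> 'a" where
  "synth xs a = (\<Sum>n. a n *\<^sub>R xs n)"

definition analysis :: "(nat \<Rightarrow> ('a::real_normed_vector \<Rightarrow>\<^sub>L real)) \<Rightarrow> 'a \<Rightarrow> nat \<Rightarrow> real" where
  "analysis ys x = (\<lambda>n. blinfun_apply (ys n) x)"

definition seq_op :: "(nat \<Rightarrow> real) set \<Rightarrow> ((nat \<Rightarrow> real) \<Rightarrow> (nat \<Rightarrow> real)) \<Rightarrow> bool" where
  "seq_op D A \<longleftrightarrow> (\<forall>a\<in>D. A a \<in> D) \<and>
     (\<forall>a\<in>D. \<forall>a'\<in>D. A (\<lambda>n. a n + a' n) = (\<lambda>n. A a n + A a' n)) \<and>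
     (\<forall>a\<in>D. \<forall>c. A (\<lambda>n. c * a n) = (\<lambda>n. c * A a n))"

end

theory Submission
  imports Defs
begin

text \<open>Since the analysis operator is a right inverse of the synthesis operator,
  \<open>\<widetilde>R B S\<close> is a solution of \<open>S A = B S\<close>; two operators solve it iff their
  difference maps into \<open>N = Ker S\<close>, because \<open>S\<close> is linear.\<close>

lemma seq_banach_diff_mem:
  assumes "seq_banach D nd" and "a \<in> D" and "b \<in> D"
  shows "(\<lambda>n. a n - b n) \<in> D"
proof -
  have add: "\<forall>a\<in>D. \<forall>b\<in>D. (\<lambda>n. a n + b n) \<in> D"
    and scale: "\<forall>a\<in>D. \<forall>c. (\<lambda>n. c * a n) \<in> D"
    using assms(1) unfolding seq_banach_def by blast+
  have "(\<lambda>n. (-1) * b n) \<in> D"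
    using scale assms(3) by blast
  from add[rule_format, OF assms(2) this] show ?thesis by simp
qed

lemma synth_add:
  assumes "summable (\<lambda>n. a n *\<^sub>R xs n)" and "summable (\<lambda>n. b n *\<^sub>R xs n)"
  shows "synth xs (\<lambda>n. a n + b n) = synth xs a + synth xs b"
  unfolding synth_def using assms by (simp add: suminf_add scaleR_add_left)

lemma synth_diff:
  assumes "summable (\<lambda>n. a n *\<^sub>R xs n)" and "summable (\<lambda>n. b n *\<^sub>R xs n)"
  shows "synth xs (\<lambda>n. a n - b n) = synth xs a - synth xs b"
  unfolding synth_def using assms by (simp add: suminf_diff scaleR_diff_left)

lemma synth_scale:
  assumes "summable (\<lambda>n. a n *\<^sub>R xs n)"
  shows "synth xs (\<lambda>n. c * a n) = c *\<^sub>R synth xs a"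
  unfolding synth_def using suminf_scaleR_right[OF assms, of c] by simp

lemma frame_analysis_mem: "is_frame D nd ys \<Longrightarrow> analysis ys x \<in> D"
  unfolding is_frame_def analysis_def by blast

lemma cross_frame_synth_analysis:
  "is_cross_frame D nd xs ys \<Longrightarrow> synth xs (analysis ys x) = x"
  unfolding is_cross_frame_def synth_def analysis_def by (metis sums_unique)

lemma seq_op_analysis_comp:
  assumes "is_frame D nd ys"
    and "\<And>a b. a \<in> D \<Longrightarrow> b \<in> D \<Longrightarrow> T (\<lambda>n. a n + b n) = T a + T b"
    and "\<And>a c. a \<in> D \<Longrightarrow> T (\<lambda>n. c * a n) = c *\<^sub>R T a"
  shows "seq_op D (\<lambda>a. analysis ys (T a))"
  unfolding seq_op_def
  using assms frame_analysis_mem[OF assms(1)]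
  by (simp add: analysis_def blinfun.add_right blinfun.scaleR_right)

lemma seq_op_diff:
  assumes "seq_banach D nd" and "seq_op D A" and "seq_op D A'"
  shows "seq_op D (\<lambda>a n. A a n - A' a n)"
  using assms seq_banach_diff_mem[OF assms(1)] unfolding seq_op_def
  by (auto simp: algebra_simps)

lemma intertwining_iff_diff_in_kernel:
  assumes "seq_banach D nd" and summable: "\<forall>a\<in>D. summable (\<lambda>n. a n *\<^sub>R xs n)"
    and "seq_op D A" and "seq_op D R"
    and R_solves: "\<forall>a\<in>D. synth xs (R a) = B (synth xs a)"
  shows "(\<forall>a\<in>D. synth xs (A a) = B (synth xs a)) \<longleftrightarrow>
         (\<forall>a\<in>D. synth xs (\<lambda>n. A a n - R a n) = 0)"
proof -
  have "synth xs (\<lambda>n. A a n - R a n) = synth xs (A a) - B (synth xs a)" if "a \<in> D" for a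
    using assms that unfolding seq_op_def by (simp add: synth_diff)
  then show ?thesis by simp
qed

theorem theorem10:
  fixes D :: "(nat \<Rightarrow> real) set" and nd :: "(nat \<Rightarrow> real) \<Rightarrow> real"
    and xs :: "nat \<Rightarrow> 'a::banach" and ys :: "nat \<Rightarrow> ('a \<Rightarrow>\<^sub>L real)"
    and B :: "'a \<Rightarrow> 'a"
  assumes Xd: "seq_banach D nd" and basis: "unit_basis D nd"
    and dbasis: "coord_dual_basis D nd"
    and cross: "is_cross_frame D nd xs ys"
    and S_def: "\<forall>a\<in>D. summable (\<lambda>n. a n *\<^sub>R xs n)"
    and B_lin: "linear B"
  shows "(\<exists>A. seq_op D A \<and> (\<forall>a\<in>D. synth xs (A a) = B (synth xs a))) \<and>
         (\<forall>A. seq_op D A \<longrightarrow>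
            ((\<forall>a\<in>D. synth xs (A a) = B (synth xs a)) \<longleftrightarrow>
             (\<exists>A0. seq_op D A0 \<and> (\<forall>a\<in>D. synth xs (A0 a) = 0) \<and>
                   (\<forall>a\<in>D. A a = (\<lambda>n. analysis ys (B (synth xs a)) n + A0 a n)))))"
proof -
  define R where "R = (\<lambda>a. analysis ys (B (synth xs a)))"
  have R_op: "seq_op D R"
    unfolding R_def using cross S_def B_lin
    by (intro seq_op_analysis_comp)
       (auto simp: is_cross_frame_def synth_add synth_scale linear_add linear_scale)
  have R_solves: "\<forall>a\<in>D. synth xs (R a) = B (synth xs a)"
    unfolding R_def using cross_frame_synth_analysis[OF cross] by simp
  have "(\<forall>a\<in>D. synth xs (A a) = B (synth xs a)) \<longleftrightarrow>
        (\<exists>A0. seq_op D A0 \<and> (\<forall>a\<in>D. synth xs (A0 a) = 0) \<and> (\<forall>a\<in>D. A a = (\<lambda>n. R a n + A0 a n)))"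
    if A_op: "seq_op D A" for A
  proof -
    have "(\<exists>A0. seq_op D A0 \<and> (\<forall>a\<in>D. synth xs (A0 a) = 0) \<and> (\<forall>a\<in>D. A a = (\<lambda>n. R a n + A0 a n)))
          \<longleftrightarrow> (\<forall>a\<in>D. synth xs (\<lambda>n. A a n - R a n) = 0)"
      using seq_op_diff[OF Xd A_op R_op] by (auto intro!: exI[of _ "\<lambda>a n. A a n - R a n"])
    then show ?thesis
      using intertwining_iff_diff_in_kernel[OF Xd S_def A_op R_op R_solves] by simp
  qed
  then show ?thesis
    using R_op R_solves unfolding R_def by blast
qed

end
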